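(* Let $\Lambda=(V,\pi,v,\le)$ be a bi-colored weighted ordered vertex with $r(\Lambda)=2$ and $|V_\bullet|=1$, identify $V=\{1,\dots,l\}$ via $\le$, and suppose $s(\Lambda)\ne0$. Then: if $\pi(1)=\circ$, $\pi(2)=\bullet$ and $\pi(i)=\circ$ for all $i\ge3$, then $s(\Lambda)=(-1)^l$; if $\pi(1)=\bullet$ and $\pi(i)=\circ$ for all $i\ge2$, then $s(\Lambda)=(-1)^{l-1}$.
   Context: A bi-colored weighted ordered vertex is $\Lambda=(V,\pi,v,\le)$ with $V$ a finite set, $\pi\colon V\to\{\bullet,\circ\}$, $v\colon V\to\mathbb{Z}_{\ge1}$, $\le$ a total order on $V$. Put $V_\bullet=\pi^{-1}(\bullet)$, $V_\circ=\pi^{-1}(\circ)$, $r(\Lambda)=\sum_{i\in V_\bullet}v(i)$; $v_i=(v(i),0)$ if $i\in V_\bullet$, $v_i=(0,v(i))$ if $i\in V_\circ$. For $(r,n)\in\mathbb{Z}_{\ge0}^2\setminus\{0\}$ let $\mu(r,n)=n/r\in\mathbb{Q}\cup\{\infty\}$ ($\infty$ if $r=0$). For vectors $w_1,\dots,w_l$ define $s_l(w_1,\dots,w_l)=(-1)^k$ if for each $i=1,\dots,l-1$ either (a) $\mu(w_i)>\mu(w_{i+1})$ and $\mu(w_1+\dots+w_i)\ge\mu(w_{i+1}+\dots+w_l)$, or (b) $\mu(w_i)\le\mu(w_{i+1})$ and $\mu(w_1+\dots+w_i)<\mu(w_{i+1}+\dots+w_l)$, where $k$ is the number of $i$ satisfying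 (b); otherwise $s_l=0$. Set $s(\Lambda)=s_l(v_1,\dots,v_l)$, $l=|V|$. *)

theory Defs
  imports "HOL-Library.Extended_Real"
begin

datatype color = Black | White

text \<open>A bi-colored weighted ordered vertex, with V identified with {1..l} via the
  total order, is represented as the list of (colour, weight) of its vertices in order.\<close>
type_synonym bwov = "(color \<times> nat) list"

definition wf_bwov :: "bwov \<Rightarrow> bool" where
  "wf_bwov L \<longleftrightarrow> (\<forall>x\<in>set L. snd x \<ge> 1)"

definition r_of :: "bwov \<Rightarrow> nat" where
  "r_of L = sum_list (map snd (filter (\<lambda>x. fst x = Black) L))"

definition n_black :: "bwov \<Rightarrow> nat" where
  "n_black L = length (filter (\<lambda>x. fst x = Black) L)"

definition vec_of :: "color \<times> nat \<Rightarrow> nat \<times> nat" where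
  "vec_of x = (if fst x = Black then (snd x, 0) else (0, snd x))"

definition mu :: "nat \<times> nat \<Rightarrow> ereal" where
  "mu w = (if fst w = 0 then PInfty else ereal (real (snd w) / real (fst w)))"

definition vsum :: "(nat \<times> nat) list \<Rightarrow> nat \<times> nat" where
  "vsum ws = (sum_list (map fst ws), sum_list (map snd ws))"

text \<open>Conditions (a) and (b) at position i (1 \<le> i \<le> l-1), with 1-based w_1..w_l
  stored as ws!0..ws!(l-1).\<close>
definition cond_a :: "(nat \<times> nat) list \<Rightarrow> nat \<Rightarrow> bool" where
  "cond_a ws i \<longleftrightarrow> mu (ws ! (i - 1)) > mu (ws ! i) \<and>
       mu (vsum (take i ws)) \<ge> mu (vsum (drop i ws))"

definition cond_b :: "(nat \<times> nat) list \<Rightarrow> nat \<Rightarrow> bool" where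
  "cond_b ws i \<longleftrightarrow> mu (ws ! (i - 1)) \<le> mu (ws ! i) \<and>
       mu (vsum (take i ws)) < mu (vsum (drop i ws))"

definition s_l :: "(nat \<times> nat) list \<Rightarrow> int" where
  "s_l ws = (if (\<forall>i\<in>{1..<length ws}. cond_a ws i \<or> cond_b ws i)
             then (-1) ^ card {i\<in>{1..<length ws}. cond_b ws i} else 0)"

definition s_of :: "bwov \<Rightarrow> int" where
  "s_of L = s_l (map vec_of L)"

end

theory Submission
  imports Defs
begin

text \<open>Only first coordinates matter: a vector or partial sum has slope \<open>\<infinity>\<close> exactly when it
  contains no black weight.  After the single black vertex every tail has slope \<open>\<infinity>\<close> while
  every head has finite slope, so each later position satisfies (b); a white first vertex adds
  one position, just before the black one, which satisfies (a) but not (b).  Hence the sign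
  is \<open>(-1)\<close> to the number of white vertices after the black one.\<close>

lemma mu_eq_infinity_iff: "mu w = \<infinity> \<longleftrightarrow> fst w = 0"
  by (simp add: mu_def)

lemma fst_vsum: "fst (vsum ws) = sum_list (map fst ws)"
  by (simp add: vsum_def)

lemma mu_vsum_eq_infinity_if_vertical:
  "\<forall>w\<in>set ws. fst w = 0 \<Longrightarrow> mu (vsum ws) = \<infinity>"
  by (simp add: mu_eq_infinity_iff fst_vsum sum_list_eq_0_iff)

lemma cond_b_if_vertical_tail:
  assumes "i < length ws" "\<forall>w\<in>set (drop i ws). fst w = 0" "fst (vsum (take i ws)) > 0"
  shows "cond_b ws i"
proof -
  have "ws ! i \<in> set (drop i ws)"
    using assms(1) nth_mem[of 0 "drop i ws"] by simp
  then have "mu (ws ! i) = \<infinity>"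
    using assms(2) mu_eq_infinity_iff by blast
  moreover have "mu (vsum (drop i ws)) = \<infinity>"
    using assms(2) by (rule mu_vsum_eq_infinity_if_vertical)
  moreover have "mu (vsum (take i ws)) \<noteq> \<infinity>"
    using assms(3) by (simp add: mu_eq_infinity_iff)
  ultimately show ?thesis
    by (simp add: cond_b_def less_le)
qed

lemma cond_a_at_first_non_vertical:
  assumes "0 < i" "i < length ws" "\<forall>w\<in>set (take i ws). fst w = 0" "fst (ws ! i) > 0"
  shows "cond_a ws i" and "\<not> cond_b ws i"
proof -
  have "ws ! (i - 1) \<in> set (take i ws)"
    using assms(1,2) by (auto simp: in_set_conv_nth intro!: exI[of _ "i - 1"])
  then have prev: "mu (ws ! (i - 1)) = \<infinity>"
    using assms(3) mu_eq_infinity_iff by blast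
  have cur: "mu (ws ! i) < \<infinity>"
    using assms(4) by (simp add: mu_def)
  have "mu (vsum (take i ws)) = \<infinity>"
    using assms(3) by (rule mu_vsum_eq_infinity_if_vertical)
  with prev cur show "cond_a ws i" and "\<not> cond_b ws i"
    by (simp_all add: cond_a_def cond_b_def)
qed

lemma s_l_single_horizontal:
  assumes "b > 0" "length us \<le> 1"
    and "\<forall>w\<in>set us. fst w = 0" "\<forall>w\<in>set zs. fst w = 0"
  shows "s_l (us @ (b, 0) # zs) = (-1) ^ length zs"
proof -
  define ws where "ws = us @ (b, 0) # zs"
  define k where "k = length us"
  have len: "length ws = Suc k + length zs"
    by (simp add: ws_def k_def)
  have after: "cond_b ws i" if "k < i" "i < length ws" for i
  proof (rule cond_b_if_vertical_tail)
    show "\<forall>w\<in>set (drop i ws). fst w = 0"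
      using that assms(4) set_drop_subset[of "i - Suc k" zs]
      by (auto simp: ws_def k_def drop_append drop_Cons')
    have "take i ws = us @ (b, 0) # take (i - Suc k) zs"
      using that by (simp add: ws_def k_def take_append take_Cons')
    then show "fst (vsum (take i ws)) > 0"
      using assms(1) by (simp add: fst_vsum)
  qed (use that in simp)
  have at_black: "cond_a ws k \<and> \<not> cond_b ws k" if "0 < k"
    using cond_a_at_first_non_vertical[of k ws] that assms(1,3)
    by (simp add: ws_def k_def)
  have positions: "i = k \<and> 0 < k \<or> k < i" if "1 \<le> i" for i
    using that assms(2) by (auto simp: k_def)
  have "\<forall>i\<in>{1..<length ws}. cond_a ws i \<or> cond_b ws i"
    using positions after at_black by fastforce
  moreover have "{i\<in>{1..<length ws}. cond_b ws i} = {Suc k..<length ws}"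
    using positions after at_black by fastforce
  ultimately show ?thesis
    using len by (simp add: s_l_def ws_def)
qed

lemma white_outside_single_black:
  assumes "\<forall>i<length L. i \<noteq> k \<longrightarrow> fst (L ! i) = White"
  shows "\<forall>x\<in>set (take k L). fst x = White" and "\<forall>x\<in>set (drop (Suc k) L). fst x = White"
proof -
  show "\<forall>x\<in>set (take k L). fst x = White"
    using assms by (fastforce simp: in_set_conv_nth)
  show "\<forall>x\<in>set (drop (Suc k) L). fst x = White"
  proof
    fix x assume "x \<in> set (drop (Suc k) L)"
    then obtain j where "j < length L - Suc k" "x = L ! (Suc k + j)"
      by (auto simp: in_set_conv_nth)
    with assms show "fst x = White" by simp
  qed
qed

lemma s_of_single_black:
  assumes "k \<le> 1" "k < length L" "fst (L ! k) = Black" "r_of L > 0"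
    and white: "\<forall>i<length L. i \<noteq> k \<longrightarrow> fst (L ! i) = White"
  shows "s_of L = (-1) ^ (length L - Suc k)"
proof -
  define us where "us = take k L"
  define zs where "zs = drop (Suc k) L"
  have L: "L = us @ L ! k # zs"
    using assms(2) by (simp add: us_def zs_def id_take_nth_drop)
  have us: "\<forall>x\<in>set us. fst x = White" and zs: "\<forall>x\<in>set zs. fst x = White"
    using white_outside_single_black[OF white] by (simp_all add: us_def zs_def)
  then have "r_of L = snd (L ! k)"
    using assms(3) by (subst L) (simp add: r_of_def filter_empty_conv)
  moreover have "map vec_of L = map vec_of us @ (snd (L ! k), 0) # map vec_of zs"
    using assms(3) by (subst L) (simp add: vec_of_def)
  moreover have "length zs = length L - Suc k"
    by (simp add: zs_def)
  ultimately show ?thesis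
    using s_l_single_horizontal[of "snd (L ! k)" "map vec_of us" "map vec_of zs"] assms(1,4) us zs
    by (simp add: s_of_def vec_of_def us_def)
qed

theorem lemma4p9:
  fixes L :: bwov
  assumes "wf_bwov L"
    and "r_of L = 2"
    and "n_black L = 1"
    and "s_of L \<noteq> 0"
  shows "((length L \<ge> 2 \<and> fst (L ! 0) = White \<and> fst (L ! 1) = Black \<and>
            (\<forall>i. 2 \<le> i \<and> i < length L \<longrightarrow> fst (L ! i) = White))
           \<longrightarrow> s_of L = (-1) ^ length L)
       \<and> ((length L \<ge> 1 \<and> fst (L ! 0) = Black \<and>
            (\<forall>i. 1 \<le> i \<and> i < length L \<longrightarrow> fst (L ! i) = White))
           \<longrightarrow> s_of L = (-1) ^ (length L - 1))"
proof (intro conjI impI)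
  assume white_black_white: "length L \<ge> 2 \<and> fst (L ! 0) = White \<and> fst (L ! 1) = Black \<and>
    (\<forall>i. 2 \<le> i \<and> i < length L \<longrightarrow> fst (L ! i) = White)"
  then have "\<forall>i<length L. i \<noteq> 1 \<longrightarrow> fst (L ! i) = White"
    by (metis One_nat_def less_2_cases not_less)
  then have "s_of L = (-1) ^ (length L - Suc 1)"
    using s_of_single_black[of 1 L] white_black_white assms(2) by simp
  also have "\<dots> = (-1) ^ length L"
    using white_black_white by (metis Suc_1 le_add_diff_inverse2 power_add power_minus1_even mult_1_right)
  finally show "s_of L = (-1) ^ length L" .
next
  assume "length L \<ge> 1 \<and> fst (L ! 0) = Black \<and>
    (\<forall>i. 1 \<le> i \<and> i < length L \<longrightarrow> fst (L ! i) = White)"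
  then show "s_of L = (-1) ^ (length L - 1)"
    using s_of_single_black[of 0 L] assms(2) by fastforce
qed

end
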